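(* Let $X_1,\dots,X_n$ be mutually independent random variables with product distribution $\mu$ and let $A_1,\dots,A_m$ be events, $A_i$ determined by the variables indexed by $\mathrm{vbl}(A_i)\subseteq[n]$, such that $\Pr_\mu(A_i\wedge A_j)=0$ whenever $i\ne j$ and $\mathrm{vbl}(A_i)\cap\mathrm{vbl}(A_j)\ne\emptyset$. Let $G$ be the dependency graph on $[m]$ (distinct $i,j$ adjacent iff $\mathrm{vbl}(A_i)\cap\mathrm{vbl}(A_j)\neq\emptyset$), $\mathcal{I}$ its collection of independent sets (including $\emptyset$), $p_i=\Pr_\mu(A_i)$, $\mathbf p=(p_1,\dots,p_m)$, and for $\mathbf y\in\mathbb R^m$ set $q_\emptyset(\mathbf y)=\sum_{I\in\mathcal I}(-1)^{|I|}\prod_{i\in I}y_i$. If $q_\emptyset(\mathbf p)>0$, then $q_\emptyset(p_1,\dots,p_{i-1},p_iz,p_{i+1},\dots,p_m)>0$ for every $i\in[m]$ and every $0\le z\le1$. *)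

theory Defs
  imports "HOL-Probability.Probability"
begin

text \<open>Variable framework: variables indexed by {..<n}, events by {..<m}.
  The probability space is the product space of the variable distributions.\<close>

definition determined_by :: "(nat \<Rightarrow> 'b) measure \<Rightarrow> (nat \<Rightarrow> 'b) set \<Rightarrow> nat set \<Rightarrow> bool" where
  "determined_by \<mu> A S \<longleftrightarrow>
     (\<forall>\<omega>\<in>space \<mu>. \<forall>\<omega>'\<in>space \<mu>. (\<forall>j\<in>S. \<omega> j = \<omega>' j) \<longrightarrow> (\<omega> \<in> A \<longleftrightarrow> \<omega>' \<in> A))"

definition dep_adj :: "(nat \<Rightarrow> nat set) \<Rightarrow> nat \<Rightarrow> nat \<Rightarrow> bool" where
  "dep_adj vbl i j \<longleftrightarrow> i \<noteq> j \<and> vbl i \<inter> vbl j \<noteq> {}"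

definition indep_sets :: "nat \<Rightarrow> (nat \<Rightarrow> nat set) \<Rightarrow> nat set set" where
  "indep_sets m vbl = {I. I \<subseteq> {..<m} \<and> (\<forall>i\<in>I. \<forall>j\<in>I. \<not> dep_adj vbl i j)}"

definition q_empty :: "nat \<Rightarrow> (nat \<Rightarrow> nat set) \<Rightarrow> (nat \<Rightarrow> real) \<Rightarrow> real" where
  "q_empty m vbl y = (\<Sum>I\<in>indep_sets m vbl. (-1) ^ card I * (\<Prod>i\<in>I. y i))"

end

theory Submission
  imports Defs
begin

text \<open>Write \<open>E\<^sub>T\<close> for the event that no \<open>A\<^sub>j\<close> with \<open>j \<in> T\<close> occurs, and \<open>q\<^sub>T\<close> for the
  independence polynomial of the dependency graph restricted to \<open>T\<close>. Then
  \<open>Pr(E\<^sub>T) = q\<^sub>T(p)\<close> by strong induction on \<open>T\<close>: for \<open>i \<in> T\<close>,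
  \<open>Pr(E\<^sub>T) = Pr(E\<^sub>T\<^sub>-\<^sub>i) - Pr(E\<^sub>T\<^sub>-\<^sub>i \<inter> A\<^sub>i)\<close>, and up to a null set (the intersections of
  \<open>A\<^sub>i\<close> with its neighbours) \<open>E\<^sub>T\<^sub>-\<^sub>i \<inter> A\<^sub>i = A\<^sub>i \<inter> E\<^sub>N\<close>, where \<open>N\<close> are the non-neighbours
  of \<open>i\<close> in \<open>T\<close>; since \<open>E\<^sub>N\<close> depends on variables disjoint from those of \<open>A\<^sub>i\<close>, this has
  probability \<open>p\<^sub>i Pr(E\<^sub>N)\<close>, matching the recursion \<open>q\<^sub>T = q\<^sub>T\<^sub>-\<^sub>i - y\<^sub>i q\<^sub>N\<close>.
  In particular \<open>q\<^sub>N(p) \<ge> 0\<close>, and since \<open>q\<^sub>\<emptyset>\<close> is affine in \<open>y\<^sub>i\<close> with slope \<open>-q\<^sub>N\<close>,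
  shrinking \<open>p\<^sub>i\<close> cannot decrease it.\<close>

lemma determined_by_mono: "determined_by \<mu> A S \<Longrightarrow> S \<subseteq> S' \<Longrightarrow> determined_by \<mu> A S'"
  unfolding determined_by_def by blast

lemma determined_by_Diff_UN:
  "(\<And>j. j \<in> N \<Longrightarrow> determined_by \<mu> (A j) S) \<Longrightarrow> determined_by \<mu> (space \<mu> - (\<Union>j\<in>N. A j)) S"
  unfolding determined_by_def by blast

lemma determined_by_imp_vimage_restrict:
  assumes A: "A \<in> sets (PiM I M)" and S: "S \<subseteq> I"
    and det: "determined_by (PiM I M) A S" and \<omega>\<^sub>0: "\<omega>\<^sub>0 \<in> space (PiM I M)"
  shows "\<exists>A'\<in>sets (PiM S M). A = (\<lambda>\<omega>. restrict \<omega> S) -` A' \<inter> space (PiM I M)"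
proof -
  \<comment> \<open>\<open>A'\<close> is the section of \<open>A\<close> obtained by freezing the coordinates outside \<open>S\<close> to \<open>\<omega>\<^sub>0\<close>.\<close>
  let ?f = "\<lambda>x. merge S (I - S) (x, restrict \<omega>\<^sub>0 (I - S))"
  have y: "restrict \<omega>\<^sub>0 (I - S) \<in> space (PiM (I - S) M)" using \<omega>\<^sub>0 by (auto simp: space_PiM)
  have f: "?f \<in> measurable (PiM S M) (PiM I M)"
    using measurable_compose[OF measurable_Pair2'[OF y] measurable_merge[of S "I - S" M]] S
    by (simp add: Un_absorb1)
  define A' where "A' = ?f -` A \<inter> space (PiM S M)"
  have agree: "restrict \<omega> S \<in> space (PiM S M) \<and> (\<omega> \<in> A \<longleftrightarrow> ?f (restrict \<omega> S) \<in> A)"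
    if \<omega>: "\<omega> \<in> space (PiM I M)" for \<omega>
  proof -
    have r: "restrict \<omega> S \<in> space (PiM S M)" using \<omega> S by (auto simp: space_PiM)
    have fs: "?f (restrict \<omega> S) \<in> space (PiM I M)" using measurable_space[OF f r] .
    have "\<forall>j\<in>S. \<omega> j = ?f (restrict \<omega> S) j" by (simp add: merge_def)
    with det \<omega> fs r show ?thesis unfolding determined_by_def by blast
  qed
  have "A' \<in> sets (PiM S M)" unfolding A'_def using measurable_sets[OF f A] .
  moreover have "A = (\<lambda>\<omega>. restrict \<omega> S) -` A' \<inter> space (PiM I M)"
  proof (intro set_eqI iffI)
    fix \<omega> assume \<omega>: "\<omega> \<in> A"
    then have "\<omega> \<in> space (PiM I M)" using sets.sets_into_space[OF A] by blast
    with \<omega> agree[of \<omega>] show "\<omega> \<in> (\<lambda>\<omega>. restrict \<omega> S) -` A' \<inter> space (PiM I M)"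
      unfolding A'_def by blast
  next
    fix \<omega> assume "\<omega> \<in> (\<lambda>\<omega>. restrict \<omega> S) -` A' \<inter> space (PiM I M)"
    with agree[of \<omega>] show "\<omega> \<in> A" unfolding A'_def by blast
  qed
  ultimately show ?thesis by blast
qed

lemma (in product_prob_space) indep_vars_coordinates: "P.indep_vars M (\<lambda>i \<omega>. \<omega> i) I"
proof (cases "I = {}")
  case True
  then show ?thesis unfolding P.indep_vars_def P.indep_sets_def by simp
next
  case False
  have "distr (PiM I M) (PiM I M) (\<lambda>x. \<lambda>i\<in>I. x i) = distr (PiM I M) (PiM I M) (\<lambda>x. x)"
    by (rule distr_cong) (auto simp: space_PiM)
  also have "\<dots> = PiM I (\<lambda>i. distr (PiM I M) (M i) (\<lambda>\<omega>. \<omega> i))"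
    by (simp add: PiM_component cong: PiM_cong)
  finally show ?thesis
    by (subst P.indep_vars_iff_distr_eq_PiM'[OF False]) auto
qed

lemma measure_PiM_Int_determined_by_disjoint:
  assumes prob: "\<And>j. j \<in> I \<Longrightarrow> prob_space (M j)"
    and A: "A \<in> sets (PiM I M)" and B: "B \<in> sets (PiM I M)"
    and J: "J \<subseteq> I" and K: "K \<subseteq> I" and JK: "J \<inter> K = {}"
    and detA: "determined_by (PiM I M) A J" and detB: "determined_by (PiM I M) B K"
  shows "measure (PiM I M) (A \<inter> B) = measure (PiM I M) A * measure (PiM I M) B"
proof -
  \<comment> \<open>\<open>product_prob_space\<close> needs a probability space at every index, also outside \<open>I\<close>.\<close>
  define M' where "M' i = (if i \<in> I then M i else return (count_space UNIV) undefined)" for i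
  have eq: "PiM I M' = PiM I M" by (rule PiM_cong) (auto simp: M'_def)
  have "prob_space (M' i)" for i
    by (cases "i \<in> I") (simp_all add: M'_def prob prob_space_return)
  then interpret product_prob_space M' I
    by (intro product_prob_space.intro product_sigma_finite.intro product_prob_space_axioms.intro
        prob_space_imp_sigma_finite)
  let ?\<sigma> = "\<lambda>S. sigma_sets (space (PiM I M'))
                 {(\<lambda>\<omega>. restrict \<omega> S) -` X \<inter> space (PiM I M') | X. X \<in> sets (PiM S M')}"
  obtain \<omega>\<^sub>0 where \<omega>\<^sub>0: "\<omega>\<^sub>0 \<in> space (PiM I M')" using P.not_empty by blast
  have "P.indep_var (PiM J M') (\<lambda>\<omega>. restrict (\<lambda>i. \<omega> i) J) (PiM K M') (\<lambda>\<omega>. restrict (\<lambda>i. \<omega> i) K)"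
    using P.indep_var_restrict[OF indep_vars_coordinates JK J K] .
  then have indep: "P.indep_set (?\<sigma> J) (?\<sigma> K)"
    unfolding P.indep_var_eq by simp
  have "A \<in> ?\<sigma> J"
    using determined_by_imp_vimage_restrict[OF _ J _ \<omega>\<^sub>0] A detA
    by (auto simp: eq intro: sigma_sets.Basic)
  moreover have "B \<in> ?\<sigma> K"
    using determined_by_imp_vimage_restrict[OF _ K _ \<omega>\<^sub>0] B detB
    by (auto simp: eq intro: sigma_sets.Basic)
  ultimately show ?thesis
    using P.indep_setD[OF indep] by (simp add: eq)
qed

lemma finite_indep_sets: "finite (indep_sets m vbl)"
  by (rule finite_subset[of _ "Pow {..<m}"]) (auto simp: indep_sets_def)

lemma insert_indep_sets:
  assumes "J \<in> indep_sets m vbl" "i < m" "\<And>j. j \<in> J \<Longrightarrow> vbl j \<inter> vbl i = {}"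
  shows "insert i J \<in> indep_sets m vbl"
  using assms unfolding indep_sets_def dep_adj_def by (auto simp: inf_commute[of "vbl i"])

lemma indep_sets_Diff: "I \<in> indep_sets m vbl \<Longrightarrow> I - K \<in> indep_sets m vbl"
  unfolding indep_sets_def by auto

lemma indep_sets_disjoint_vbl:
  "I \<in> indep_sets m vbl \<Longrightarrow> i \<in> I \<Longrightarrow> j \<in> I \<Longrightarrow> i \<noteq> j \<Longrightarrow> vbl j \<inter> vbl i = {}"
  unfolding indep_sets_def dep_adj_def by blast

lemma indep_sets_containing_eq_image_insert:
  fixes vbl :: "nat \<Rightarrow> nat set"
  assumes i: "i \<in> T" and T: "T \<subseteq> {..<m}"
  defines "N \<equiv> {j\<in>T - {i}. vbl j \<inter> vbl i = {}}"
  shows "{I\<in>indep_sets m vbl. I \<subseteq> T \<and> i \<in> I} = insert i ` {J\<in>indep_sets m vbl. J \<subseteq> N}"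
proof (intro set_eqI iffI)
  fix I assume I: "I \<in> {I\<in>indep_sets m vbl. I \<subseteq> T \<and> i \<in> I}"
  then have "I - {i} \<in> indep_sets m vbl" "I = insert i (I - {i})"
    using indep_sets_Diff[of I] by auto
  moreover have "I - {i} \<subseteq> N"
  proof
    fix j assume "j \<in> I - {i}"
    with I have "j \<in> T - {i}" "vbl j \<inter> vbl i = {}"
      using indep_sets_disjoint_vbl[of I m vbl i j] by auto
    then show "j \<in> N" unfolding N_def by blast
  qed
  ultimately show "I \<in> insert i ` {J\<in>indep_sets m vbl. J \<subseteq> N}" by blast
next
  fix I assume "I \<in> insert i ` {J\<in>indep_sets m vbl. J \<subseteq> N}"
  then obtain J where J: "J \<in> indep_sets m vbl" "J \<subseteq> N" and I: "I = insert i J" by blast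
  have "insert i J \<in> indep_sets m vbl"
    using J i T by (intro insert_indep_sets) (auto simp: N_def)
  then show "I \<in> {I\<in>indep_sets m vbl. I \<subseteq> T \<and> i \<in> I}"
    using I J i unfolding N_def by auto
qed

definition indep_poly :: "nat \<Rightarrow> (nat \<Rightarrow> nat set) \<Rightarrow> (nat \<Rightarrow> real) \<Rightarrow> nat set \<Rightarrow> real" where
  "indep_poly m vbl y T = (\<Sum>I\<in>{I\<in>indep_sets m vbl. I \<subseteq> T}. (-1) ^ card I * (\<Prod>i\<in>I. y i))"

lemma q_empty_eq_indep_poly: "q_empty m vbl y = indep_poly m vbl y {..<m}"
  unfolding q_empty_def indep_poly_def by (rule sum.cong) (auto simp: indep_sets_def)

lemma indep_poly_cong:
  "(\<And>j. j \<in> T \<Longrightarrow> y j = y' j) \<Longrightarrow> indep_poly m vbl y T = indep_poly m vbl y' T"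
  unfolding indep_poly_def by (intro sum.cong refl arg_cong2[where f="(*)"] prod.cong) auto

lemma indep_poly_empty: "indep_poly m vbl y {} = 1"
proof -
  have "{I\<in>indep_sets m vbl. I \<subseteq> {}} = {{}}" by (auto simp: indep_sets_def)
  then show ?thesis by (simp add: indep_poly_def)
qed

lemma indep_poly_remove:
  assumes i: "i \<in> T" and T: "T \<subseteq> {..<m}"
  shows "indep_poly m vbl y T =
    indep_poly m vbl y (T - {i}) - y i * indep_poly m vbl y {j\<in>T - {i}. vbl j \<inter> vbl i = {}}"
proof -
  define N where "N = {j\<in>T - {i}. vbl j \<inter> vbl i = {}}"
  define f where "f I = (-1::real) ^ card I * (\<Prod>i\<in>I. y i)" for I
  let ?S = "\<lambda>U. {I\<in>indep_sets m vbl. U I}"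
  have "?S (\<lambda>I. I \<subseteq> T) = ?S (\<lambda>I. I \<subseteq> T - {i}) \<union> ?S (\<lambda>I. I \<subseteq> T \<and> i \<in> I)" by auto
  then have "sum f (?S (\<lambda>I. I \<subseteq> T)) =
      sum f (?S (\<lambda>I. I \<subseteq> T - {i})) + sum f (?S (\<lambda>I. I \<subseteq> T \<and> i \<in> I))"
    by (simp only:) (rule sum.union_disjoint, use finite_indep_sets in auto)
  also have "sum f (?S (\<lambda>I. I \<subseteq> T \<and> i \<in> I)) = sum f (insert i ` ?S (\<lambda>J. J \<subseteq> N))"
    using indep_sets_containing_eq_image_insert[OF i T] by (simp add: N_def)
  also have "\<dots> = - (y i * sum f (?S (\<lambda>J. J \<subseteq> N)))"
  proof -
    have "inj_on (insert i) (?S (\<lambda>J. J \<subseteq> N))" unfolding N_def inj_on_def by auto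
    moreover have "f (insert i J) = - (y i * f J)" if "J \<in> ?S (\<lambda>J. J \<subseteq> N)" for J
    proof -
      have "i \<notin> J" "finite J" using that finite_subset[of J "{..<m}"]
        unfolding N_def indep_sets_def by auto
      then show ?thesis by (simp add: f_def)
    qed
    ultimately show ?thesis by (simp add: sum.reindex sum_distrib_left sum_negf)
  qed
  finally show ?thesis unfolding indep_poly_def f_def N_def by simp
qed

lemma q_empty_le_q_empty_scale:
  assumes i: "i < m" and "0 \<le> y i" and "z \<le> 1"
    and nonneg: "0 \<le> indep_poly m vbl y {j\<in>{..<m} - {i}. vbl j \<inter> vbl i = {}}"
  shows "q_empty m vbl y \<le> q_empty m vbl (y(i := y i * z))"
proof -
  let ?T = "{..<m} - {i}" and ?N = "{j\<in>{..<m} - {i}. vbl j \<inter> vbl i = {}}"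
  let ?y' = "y(i := y i * z)"
  have "q_empty m vbl ?y' = indep_poly m vbl ?y' ?T - y i * z * indep_poly m vbl ?y' ?N"
    using indep_poly_remove[of i "{..<m}" m vbl ?y'] i by (simp add: q_empty_eq_indep_poly)
  also have "\<dots> = indep_poly m vbl y ?T - y i * z * indep_poly m vbl y ?N"
    using indep_poly_cong[of ?T ?y' y] indep_poly_cong[of ?N ?y' y] by auto
  also have "\<dots> \<ge> indep_poly m vbl y ?T - y i * indep_poly m vbl y ?N"
    using mult_left_mono[of z 1 "y i * indep_poly m vbl y ?N"] assms by (simp add: algebra_simps)
  moreover have "q_empty m vbl y = indep_poly m vbl y ?T - y i * indep_poly m vbl y ?N"
    using indep_poly_remove[of i "{..<m}" m vbl y] i by (simp add: q_empty_eq_indep_poly)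
  ultimately show ?thesis by linarith
qed

locale variable_framework =
  fixes n m :: nat
    and M :: "nat \<Rightarrow> 'a measure"
    and A :: "nat \<Rightarrow> (nat \<Rightarrow> 'a) set"
    and vbl :: "nat \<Rightarrow> nat set"
  assumes prob: "\<And>j. j < n \<Longrightarrow> prob_space (M j)"
    and events: "\<And>i. i < m \<Longrightarrow> A i \<in> sets (PiM {..<n} M)"
    and vbl_sub: "\<And>i. i < m \<Longrightarrow> vbl i \<subseteq> {..<n}"
    and determined: "\<And>i. i < m \<Longrightarrow> determined_by (PiM {..<n} M) (A i) (vbl i)"
    and disjoint: "\<And>i j. i < m \<Longrightarrow> j < m \<Longrightarrow> i \<noteq> j \<Longrightarrow> vbl i \<inter> vbl j \<noteq> {}
                     \<Longrightarrow> measure (PiM {..<n} M) (A i \<inter> A j) = 0"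
begin

abbreviation \<mu> :: "(nat \<Rightarrow> 'a) measure" where "\<mu> \<equiv> PiM {..<n} M"

abbreviation p :: "nat \<Rightarrow> real" where "p i \<equiv> measure \<mu> (A i)"

sublocale P: prob_space \<mu>
  by (rule prob_space_PiM) (use prob in auto)

definition avoid :: "nat set \<Rightarrow> (nat \<Rightarrow> 'a) set" where
  "avoid T = space \<mu> - (\<Union>j\<in>T. A j)"

lemma sets_avoid: "T \<subseteq> {..<m} \<Longrightarrow> avoid T \<in> sets \<mu>"
  unfolding avoid_def using events by (intro sets.Diff sets.finite_UN) (auto intro: finite_subset)

lemma determined_by_avoid: "T \<subseteq> {..<m} \<Longrightarrow> determined_by \<mu> (avoid T) (\<Union>j\<in>T. vbl j)"
  unfolding avoid_def
  by (rule determined_by_Diff_UN, rule determined_by_mono[OF determined]) auto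

lemma measure_avoid_Int:
  assumes i: "i < m" and T: "T \<subseteq> {..<m}" and "i \<notin> T"
  shows "measure \<mu> (avoid T \<inter> A i) = p i * measure \<mu> (avoid {j\<in>T. vbl j \<inter> vbl i = {}})"
proof -
  define N where "N = {j\<in>T. vbl j \<inter> vbl i = {}}"
  have N: "N \<subseteq> {..<m}" using T by (auto simp: N_def)
  define Z where "Z = (\<Union>j\<in>T - N. A i \<inter> A j)"
  have "Z \<in> null_sets \<mu>"
    unfolding Z_def
  proof (rule null_sets.finite_UN)
    show "finite (T - N)" using T by (auto intro: finite_subset)
  next
    fix j assume "j \<in> T - N"
    then have j: "j < m" "j \<noteq> i" "vbl i \<inter> vbl j \<noteq> {}" using T \<open>i \<notin> T\<close> by (auto simp: N_def)
    then show "A i \<inter> A j \<in> null_sets \<mu>"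
      using disjoint[OF i j(1)] events[OF i] events[OF j(1)]
      by (simp add: null_sets_def P.emeasure_eq_measure)
  qed
  moreover have "avoid T \<inter> A i = (A i \<inter> avoid N) - Z"
    unfolding avoid_def Z_def N_def by auto
  ultimately have "measure \<mu> (avoid T \<inter> A i) = measure \<mu> (A i \<inter> avoid N)"
    using measure_Diff_null_set[of "A i \<inter> avoid N" \<mu> Z] events[OF i] sets_avoid[OF N] by auto
  also have "\<dots> = p i * measure \<mu> (avoid N)"
    using prob events[OF i] sets_avoid[OF N] vbl_sub[OF i] vbl_sub N determined[OF i]
      determined_by_avoid[OF N]
    by (intro measure_PiM_Int_determined_by_disjoint) (auto simp: N_def)
  finally show ?thesis unfolding N_def .
qed

lemma measure_avoid:
  assumes "T \<subseteq> {..<m}"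
  shows "measure \<mu> (avoid T) = indep_poly m vbl p T"
  using finite_subset[OF assms finite_lessThan] assms
proof (induction T rule: finite_psubset_induct)
  case (psubset T)
  show ?case
  proof (cases "T = {}")
    case True
    then show ?thesis by (simp add: avoid_def indep_poly_empty P.prob_space)
  next
    case False
    then obtain i where i: "i \<in> T" by blast
    let ?N = "{j\<in>T - {i}. vbl j \<inter> vbl i = {}}"
    have im: "i < m" using i psubset.prems by auto
    have "avoid T = avoid (T - {i}) - A i" unfolding avoid_def using i by auto
    then have "measure \<mu> (avoid T) = measure \<mu> (avoid (T - {i})) - measure \<mu> (avoid (T - {i}) \<inter> A i)"
      using P.finite_measure_Diff'[OF sets_avoid[of "T - {i}"] events[OF im]] psubset.prems by auto
    also have "\<dots> = measure \<mu> (avoid (T - {i})) - p i * measure \<mu> (avoid ?N)"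
      using measure_avoid_Int[OF im, of "T - {i}"] psubset.prems by auto
    also have "\<dots> = indep_poly m vbl p (T - {i}) - p i * indep_poly m vbl p ?N"
    proof -
      have "measure \<mu> (avoid (T - {i})) = indep_poly m vbl p (T - {i})"
        by (rule psubset.IH) (use i psubset.prems in auto)
      moreover have "measure \<mu> (avoid ?N) = indep_poly m vbl p ?N"
        by (rule psubset.IH) (use i psubset.prems in auto)
      ultimately show ?thesis by simp
    qed
    also have "\<dots> = indep_poly m vbl p T"
      using indep_poly_remove[OF i psubset.prems] by simp
    finally show ?thesis .
  qed
qed

end

theorem lemma11:
  fixes n m :: nat
    and M :: "nat \<Rightarrow> 'a measure"
    and A :: "nat \<Rightarrow> (nat \<Rightarrow> 'a) set"
    and vbl :: "nat \<Rightarrow> nat set"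
  defines "\<mu> \<equiv> PiM {..<n} M"
  defines "p \<equiv> (\<lambda>i. measure \<mu> (A i))"
  assumes prob: "\<And>j. j < n \<Longrightarrow> prob_space (M j)"
    and events: "\<And>i. i < m \<Longrightarrow> A i \<in> sets \<mu>"
    and vbl_sub: "\<And>i. i < m \<Longrightarrow> vbl i \<subseteq> {..<n}"
    and determined: "\<And>i. i < m \<Longrightarrow> determined_by \<mu> (A i) (vbl i)"
    and disjoint: "\<And>i j. i < m \<Longrightarrow> j < m \<Longrightarrow> i \<noteq> j \<Longrightarrow> vbl i \<inter> vbl j \<noteq> {}
                     \<Longrightarrow> measure \<mu> (A i \<inter> A j) = 0"
    and pos: "q_empty m vbl p > 0"
  shows "\<forall>i<m. \<forall>z::real. 0 \<le> z \<and> z \<le> 1 \<longrightarrow> q_empty m vbl (p(i := p i * z)) > 0"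
proof (intro allI impI)
  fix i :: nat and z :: real
  assume i: "i < m" and z: "0 \<le> z \<and> z \<le> 1"
  interpret variable_framework n m M A vbl
    by (rule variable_framework.intro)
      (use prob events vbl_sub determined disjoint in \<open>simp_all add: \<mu>_def\<close>)
  let ?N = "{j\<in>{..<m} - {i}. vbl j \<inter> vbl i = {}}"
  have "?N \<subseteq> {..<m}" by blast
  from measure_avoid[OF this] have "indep_poly m vbl p ?N = measure \<mu> (avoid ?N)"
    by (simp add: p_def \<mu>_def)
  then have "0 \<le> indep_poly m vbl p ?N" by simp
  moreover have "0 \<le> p i" unfolding p_def by simp
  ultimately have "q_empty m vbl p \<le> q_empty m vbl (p(i := p i * z))"
    using q_empty_le_q_empty_scale[OF i] z by blast
  with pos show "q_empty m vbl (p(i := p i * z)) > 0" by linarith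
qed

end
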